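(* Let $J\ge5$ be an integer and $L\in\{2,\dots,J-1\}$. Let $\mathbb{A}$ be the $J\times J$ symmetric tridiagonal matrix with $\mathbb{A}_{11}=\mathbb{A}_{JJ}=1$, $\mathbb{A}_{jj}=2$ for $1<j<J$, $\mathbb{A}_{j,j+1}=\mathbb{A}_{j+1,j}=-1$ for $1\le j<J$, and all other entries zero. Let $D=\mathrm{diag}(d_1,\dots,d_J)$ with $d_L=-1$ and $d_j=2$ for $j\ne L$, and let $\mathbb{B}:=\mathbb{A}D$ (so $\mathbb{B}$ coincides with $2\mathbb{A}$ except in rows $L-1,L,L+1$, whose nonzero entries in columns $L-2,\dots,L+2$ are $2(-1,2,\tfrac12)$ in row $L-1$ (columns $L-2,L-1,L$), $2(-1,-1,-1)$ in row $L$ (columns $L-1,L,L+1$), and $2(\tfrac12,2,-1)$ in row $L+1$ (columns $L,L+1,L+2$)). Then $\mathbb{B}$ is diagonalizable over $\mathbb{R}$ with $J$ distinct eigenvalues, which can be ordered as $$-1<\mu_{-1}<\mu_0=0<\mu_1<\dots<\mu_{J-2}<8 .$$ In particular, $\mathbb{B}$ has exactly one negative eigenvalue. *)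

theory Defs
  imports "Jordan_Normal_Form.Char_Poly"
begin

(* Matrices are J x J, indexed 0..J-1; paper index j corresponds to i = j - 1. *)

definition A_mat :: "nat \<Rightarrow> real mat" where
  "A_mat J = mat J J (\<lambda>(i,j).
     if i = j then (if i = 0 \<or> i = J - 1 then 1 else 2)
     else if i = j + 1 \<or> j = i + 1 then -1 else 0)"

definition D_mat :: "nat \<Rightarrow> nat \<Rightarrow> real mat" where
  "D_mat J L = mat J J (\<lambda>(i,j). if i = j then (if i + 1 = L then -1 else 2) else 0)"

definition B_mat :: "nat \<Rightarrow> nat \<Rightarrow> real mat" where
  "B_mat J L = A_mat J * D_mat J L"

definition diagonalizable_real :: "real mat \<Rightarrow> bool" where
  "diagonalizable_real M \<longleftrightarrow>
     (\<exists>Dg. Dg \<in> carrier_mat (dim_row M) (dim_row M) \<and> diagonal_mat Dg \<and> similar_mat M Dg)"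

end

theory Submission
  imports Defs "Jordan_Normal_Form.Jordan_Normal_Form_Existence"
begin

text \<open>Write \<open>A = G\<^sup>T G\<close> with \<open>G\<close> the \<open>(J - 1) \<times> J\<close> difference matrix. Then \<open>0\<close> is an
  eigenvalue of \<open>B = G\<^sup>T G D\<close>, with eigenvector \<open>D\<^sup>-\<^sup>1 (1, \<dots>, 1)\<close>, and its other eigenvalues
  are those of the symmetric tridiagonal matrix \<open>G D G\<^sup>T\<close>: the roots of the last member of a
  three-term recurrence \<open>p (k + 2) = (x - a (k + 1)) p (k + 1) - b k p k\<close> with
  \<open>b k = d (k + 1)\<^sup>2 > 0\<close>. Such a sequence is a Sturm sequence: consecutive members have real,
  simple, strictly interlacing roots, so the number of roots of \<open>p k\<close> below \<open>c\<close> grows by at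
  most one with \<open>k\<close> and has the parity dictated by the sign of \<open>p k c\<close>. Evaluating the sequence
  at \<open>-1\<close>, \<open>0\<close> and \<open>8\<close> places all \<open>J - 1\<close> roots in \<open>(-1, 8)\<close>, exactly one of them negative.
  Together with \<open>0\<close> these are \<open>J\<close> distinct eigenvalues, so the characteristic polynomial of
  \<open>B\<close> is squarefree and the Jordan normal form of \<open>B\<close> is diagonal.\<close>

section \<open>Monic real polynomials with simple real roots\<close>

lemma monic_poly_eq_prod_roots:
  fixes p :: "real poly"
  assumes lc: "lead_coeff p = 1" and card: "card {x. poly p x = 0} = degree p"
  shows "p = (\<Prod>x\<in>{x. poly p x = 0}. [:-x, 1:])"
proof -
  let ?R = "{x. poly p x = 0}"
  let ?q = "\<Prod>x\<in>?R. [:-x, 1:]"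
  have fin: "finite ?R" using lc by (intro poly_roots_finite) auto
  have deg_q: "degree ?q = degree p"
    using card by (subst degree_prod_eq_sum_degree) auto
  have lc_q: "lead_coeff ?q = 1" by (simp add: lead_coeff_prod)
  show ?thesis
  proof (rule poly_eqI_degree_lead_coeff[of p "degree p" ?q ?R])
    fix z assume "z \<in> ?R"
    then show "poly p z = poly ?q z" using fin by (auto simp: poly_prod)
  qed (use card deg_q lc lc_q in auto)
qed

lemma prod_diff_sign:
  fixes R :: "real set"
  assumes "finite R" "c \<notin> R"
  shows "0 < (-1) ^ card {x\<in>R. c < x} * (\<Prod>x\<in>R. c - x)"
  using assms
proof (induction R rule: finite_induct)
  case (insert y R)
  have IH: "0 < (-1) ^ card {x\<in>R. c < x} * (\<Prod>x\<in>R. c - x)" using insert by auto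
  show ?case
  proof (cases "c < y")
    case True
    have "{x\<in>insert y R. c < x} = insert y {x\<in>R. c < x}" using True by auto
    then have card: "card {x\<in>insert y R. c < x} = Suc (card {x\<in>R. c < x})"
      using insert by simp
    have prod: "(\<Prod>x\<in>insert y R. c - x) = (c - y) * (\<Prod>x\<in>R. c - x)"
      using insert by simp
    have "(-1) ^ card {x\<in>insert y R. c < x} * (\<Prod>x\<in>insert y R. c - x)
       = ((-1) ^ card {x\<in>R. c < x} * (\<Prod>x\<in>R. c - x)) * (y - c)"
      by (simp only: card prod power_Suc) (simp add: algebra_simps)
    then show ?thesis using IH True by simp
  next
    case False
    then have "y < c" using insert by (cases "c = y") auto
    have "{x\<in>insert y R. c < x} = {x\<in>R. c < x}" using False by auto
    then show ?thesis using insert \<open>y < c\<close> IH by (simp add: ac_simps)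
  qed
qed simp

lemma monic_poly_sign:
  fixes p :: "real poly"
  assumes "lead_coeff p = 1" and "card {x. poly p x = 0} = degree p" and "poly p c \<noteq> 0"
  shows "0 < (-1) ^ card {x. poly p x = 0 \<and> c < x} * poly p c"
proof -
  have fin: "finite {x. poly p x = 0}" using assms(1) by (intro poly_roots_finite) auto
  have "poly p c = (\<Prod>x\<in>{x. poly p x = 0}. c - x)"
    by (subst monic_poly_eq_prod_roots[OF assms(1,2)]) (simp add: poly_prod)
  moreover have "{x. poly p x = 0 \<and> c < x} = {x\<in>{x. poly p x = 0}. c < x}" by auto
  ultimately show ?thesis using prod_diff_sign[OF fin] assms(3) by auto
qed

lemma monic_poly_pos_at_top:
  fixes p :: "real poly"
  assumes "lead_coeff p = 1"
  shows "\<exists>x\<ge>c. 0 < poly p x"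
proof -
  obtain n where "\<forall>x\<ge>n. poly p x \<ge> lead_coeff p" using poly_pinfty_gt_lc[of p] assms by auto
  then have "poly p (max n c) \<ge> 1" using assms by auto
  then show ?thesis by (intro exI[of _ "max n c"]) auto
qed

lemma monic_poly_sign_at_bot:
  fixes p :: "real poly"
  assumes "lead_coeff p = 1"
  shows "\<exists>x\<le>c. 0 < (-1) ^ degree p * poly p x"
proof -
  let ?q = "Polynomial.smult ((-1) ^ degree p) (p \<circ>\<^sub>p [:0, -1:])"
  have "lead_coeff (p \<circ>\<^sub>p [:0, -1:]) = (-1) ^ degree p"
    using assms by (subst lead_coeff_comp) auto
  then have "lead_coeff ?q = 1" by (simp flip: power_mult_distrib)
  then obtain x where x: "x \<ge> - c" "0 < poly ?q x" using monic_poly_pos_at_top by blast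
  have "poly ?q x = (-1) ^ degree p * poly p (- x)" by (simp add: poly_pcompose)
  then show ?thesis using x by (intro exI[of _ "- x"]) auto
qed

definition sorted_roots :: "real poly \<Rightarrow> nat \<Rightarrow> (nat \<Rightarrow> real) \<Rightarrow> bool" where
  "sorted_roots p k r \<longleftrightarrow> strict_mono_on {..<k} r \<and> {x. poly p x = 0} = r ` {..<k}"

lemma sorted_roots_less: "sorted_roots p k r \<Longrightarrow> i < j \<Longrightarrow> j < k \<Longrightarrow> r i < r j"
  unfolding sorted_roots_def by (auto intro: strict_mono_onD)

lemma sorted_roots_le: "sorted_roots p k r \<Longrightarrow> i \<le> j \<Longrightarrow> j < k \<Longrightarrow> r i \<le> r j"
  by (metis order.order_iff_strict sorted_roots_less)

lemma sorted_roots_root: "sorted_roots p k r \<Longrightarrow> i < k \<Longrightarrow> poly p (r i) = 0"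
  unfolding sorted_roots_def by auto

lemma card_roots_with_property:
  assumes "sorted_roots p k r"
  shows "card {x. poly p x = 0 \<and> P x} = card {i. i < k \<and> P (r i)}"
proof -
  have "{x. poly p x = 0 \<and> P x} = r ` {i. i < k \<and> P (r i)}"
    using assms unfolding sorted_roots_def by auto
  moreover have "inj_on r {i. i < k \<and> P (r i)}"
    using assms unfolding sorted_roots_def
    by (rule inj_on_subset[OF strict_mono_on_imp_inj_on[OF conjunct1]]) auto
  ultimately show ?thesis by (simp add: card_image)
qed

lemma card_sorted_roots: "sorted_roots p k r \<Longrightarrow> card {x. poly p x = 0} = k"
  using card_roots_with_property[of p k r "\<lambda>_. True"] by simp

section \<open>Three-term recurrences and interlacing roots\<close>

fun three_term_poly :: "(nat \<Rightarrow> real) \<Rightarrow> (nat \<Rightarrow> real) \<Rightarrow> nat \<Rightarrow> real poly" where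
  "three_term_poly a b 0 = 1"
| "three_term_poly a b (Suc 0) = [:-a 0, 1:]"
| "three_term_poly a b (Suc (Suc k)) =
     [:-a (Suc k), 1:] * three_term_poly a b (Suc k) - Polynomial.smult (b k) (three_term_poly a b k)"

lemma degree_lead_coeff_three_term_poly:
  "degree (three_term_poly a b k) = k \<and> lead_coeff (three_term_poly a b k) = 1"
proof (induction a b k rule: three_term_poly.induct)
  case (3 a b k)
  let ?X = "[:-a (Suc k), 1:] * three_term_poly a b (Suc k)"
  let ?Y = "Polynomial.smult (b k) (three_term_poly a b k)"
  have nz: "three_term_poly a b (Suc k) \<noteq> 0" using 3 by (metis one_neq_zero leading_coeff_0_iff)
  have "degree ?X = degree [:-a (Suc k), 1:] + degree (three_term_poly a b (Suc k))"
    by (rule degree_mult_eq) (use nz in auto)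
  then have deg_X: "degree ?X = Suc (Suc k)" using 3 by simp
  have "coeff (three_term_poly a b (Suc k)) (Suc k) = 1" using 3 by metis
  then have "lead_coeff ?X = 1" by (simp only: lead_coeff_mult) (use 3 in simp)
  then have X: "coeff ?X (Suc (Suc k)) = 1" using deg_X by metis
  have deg_Y: "degree ?Y < Suc (Suc k)" using 3 by simp
  have "degree (?X - ?Y) = Suc (Suc k)"
    using deg_X deg_Y by (metis degree_add_eq_left degree_minus diff_conv_add_uminus)
  moreover have "coeff (three_term_poly a b k) (Suc (Suc k)) = 0"
    using 3 by (simp add: coeff_eq_0)
  then have "coeff (?X - ?Y) (Suc (Suc k)) = 1"
    using X by (simp only: coeff_diff coeff_smult)
  ultimately show ?case by simp
qed auto

lemma degree_three_term_poly: "degree (three_term_poly a b k) = k"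
  using degree_lead_coeff_three_term_poly by blast

lemma lead_coeff_three_term_poly: "lead_coeff (three_term_poly a b k) = 1"
  using degree_lead_coeff_three_term_poly by blast

lemma three_term_poly_nonzero: "three_term_poly a b k \<noteq> 0"
  using lead_coeff_three_term_poly[of a b k] by auto

lemma poly_three_term_poly_Suc_Suc:
  "poly (three_term_poly a b (Suc (Suc k))) x
     = (x - a (Suc k)) * poly (three_term_poly a b (Suc k)) x - b k * poly (three_term_poly a b k) x"
  by (simp add: algebra_simps)

lemma sorted_roots_of_sign_alternation:
  fixes p :: "real poly"
  assumes lc: "lead_coeff p = 1" and deg: "degree p = n"
    and e: "\<And>i j. i < j \<Longrightarrow> j \<le> n \<Longrightarrow> e i < e j"
    and sgn: "\<And>j. j \<le> n \<Longrightarrow> 0 < (-1) ^ (n - j) * poly p (e j)"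
  shows "\<exists>s. sorted_roots p n s \<and> (\<forall>j<n. e j < s j \<and> s j < e (Suc j))"
proof -
  have sign_change: "poly p (e j) * poly p (e (Suc j)) < 0" if j: "j < n" for j
  proof -
    define u where "u = ((-1::real) ^ (n - Suc j))"
    have "u * u = 1" unfolding u_def by (simp flip: power_add add: power_mult_distrib)
    have "n - j = Suc (n - Suc j)" using j by simp
    then have "0 < - u * poly p (e j)" using sgn[of j] j unfolding u_def by simp
    moreover have "0 < u * poly p (e (Suc j))" using sgn[of "Suc j"] j unfolding u_def by simp
    ultimately have "0 < (- u * poly p (e j)) * (u * poly p (e (Suc j)))" by (rule mult_pos_pos)
    also have "\<dots> = - (u * u) * (poly p (e j) * poly p (e (Suc j)))" by (simp add: algebra_simps)
    finally show ?thesis using \<open>u * u = 1\<close> by simp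
  qed
  define s where "s j = (SOME x. e j < x \<and> x < e (Suc j) \<and> poly p x = 0)" for j
  have s: "e j < s j \<and> s j < e (Suc j) \<and> poly p (s j) = 0" if "j < n" for j
    unfolding s_def
    by (rule someI_ex) (use poly_IVT[OF e sign_change] that in auto)
  have mono: "strict_mono_on {..<n} s"
  proof (rule strict_mono_onI)
    fix i j assume "i \<in> {..<n}" "j \<in> {..<n}" "i < j"
    moreover have "e (Suc i) \<le> e j" using e[of "Suc i" j] \<open>i < j\<close> \<open>j \<in> {..<n}\<close>
      by (cases "Suc i = j") auto
    ultimately have "s i < e (Suc i)" "e (Suc i) \<le> e j" "e j < s j"
      using s[of i] s[of j] by auto
    then show "s i < s j" by linarith
  qed
  have "card (s ` {..<n}) = n"
    using strict_mono_on_imp_inj_on[OF mono] by (simp add: card_image)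
  moreover have nz: "p \<noteq> 0" using lc by auto
  then have "card {x. poly p x = 0} \<le> n" using card_poly_roots_bound deg by blast
  moreover have "s ` {..<n} \<subseteq> {x. poly p x = 0}" using s by auto
  ultimately have "s ` {..<n} = {x. poly p x = 0}"
    using poly_roots_finite[OF nz] by (metis card_seteq)
  then show ?thesis unfolding sorted_roots_def using mono s by blast
qed

definition interlaces :: "(nat \<Rightarrow> real) \<Rightarrow> (nat \<Rightarrow> real) \<Rightarrow> nat \<Rightarrow> bool" where
  "interlaces r q k \<longleftrightarrow> (\<forall>i<k. r i < q i \<and> q i < r (Suc i))"

lemma sorted_roots_interlacing_points:
  fixes p :: "real poly"
  assumes lc: "lead_coeff p = 1" and deg: "degree p = Suc k"
    and c: "\<And>i j. i < j \<Longrightarrow> j < k \<Longrightarrow> c i < c j"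
    and sgn: "\<And>i. i < k \<Longrightarrow> 0 < (-1) ^ (k - i) * poly p (c i)"
  shows "\<exists>s. sorted_roots p (Suc k) s \<and> interlaces s c k"
proof -
  have c_le: "c i \<le> c j" if "i \<le> j" "j < k" for i j
    using c[of i j] that by (cases "i = j") auto
  have c_first_last: "c 0 \<le> c (k - 1)"
    using c_le[of 0 "k - 1"] by (cases k) auto
  obtain xm where xm: "xm \<le> c 0 - 1" "0 < (-1) ^ Suc k * poly p xm"
    using monic_poly_sign_at_bot[OF lc] deg by metis
  obtain xp where xp: "xp \<ge> c (k - 1) + 1" "0 < poly p xp"
    using monic_poly_pos_at_top[OF lc] by blast
  define e where "e j = (if j = 0 then xm else if j \<le> k then c (j - 1) else xp)" for j
  have "e i < e j" if ij: "i < j" "j \<le> Suc k" for i j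
  proof -
    consider "i = 0" "j \<le> k" | "i = 0" "j = Suc k" | "0 < i" "j \<le> k" | "0 < i" "j = Suc k"
      using ij by linarith
    then show ?thesis
    proof cases
      case 1
      then have "c 0 \<le> c (j - 1)" using ij c_le[of 0 "j - 1"] by simp
      then show ?thesis using 1 ij xm unfolding e_def by simp
    next
      case 2 then show ?thesis using xm xp c_first_last unfolding e_def by auto
    next
      case 3 then show ?thesis using ij c[of "i - 1" "j - 1"] unfolding e_def by auto
    next
      case 4
      then have "c (i - 1) \<le> c (k - 1)" using ij c_le[of "i - 1" "k - 1"] by simp
      then show ?thesis using 4 ij xp unfolding e_def by simp
    qed
  qed
  moreover have "0 < (-1) ^ (Suc k - j) * poly p (e j)" if j: "j \<le> Suc k" for j
  proof -
    consider "j = 0" | "0 < j" "j \<le> k" | "j = Suc k" using j by (metis gr0I le_SucE)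
    then show ?thesis
    proof cases
      case 2
      then have "Suc k - j = k - (j - 1)" by simp
      then show ?thesis using 2 sgn[of "j - 1"] unfolding e_def by simp
    qed (use xm xp in \<open>auto simp: e_def\<close>)
  qed
  ultimately obtain s where s: "sorted_roots p (Suc k) s"
    and between: "\<And>j. j < Suc k \<Longrightarrow> e j < s j \<and> s j < e (Suc j)"
    using sorted_roots_of_sign_alternation[OF lc deg, of e] by blast
  have "interlaces s c k"
    unfolding interlaces_def
  proof (intro allI impI)
    fix i assume "i < k"
    then show "s i < c i \<and> c i < s (Suc i)"
      using between[of i] between[of "Suc i"] by (auto simp: e_def)
  qed
  then show ?thesis using s by blast
qed

lemma three_term_poly_sign_at_roots:
  assumes b: "b m > 0"
    and r: "sorted_roots (three_term_poly a b (Suc m)) (Suc m) r"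
    and q: "sorted_roots (three_term_poly a b m) m q"
    and rq: "interlaces r q m" and i: "i < Suc m"
  shows "0 < (-1) ^ (Suc m - i) * poly (three_term_poly a b (Suc (Suc m))) (r i)"
proof -
  let ?Q = "three_term_poly a b m"
  have position: "if i \<le> j then r i < q j else q j < r i" if j: "j < m" for j
  proof (cases "i \<le> j")
    case True
    then show ?thesis using rq j sorted_roots_le[OF r, of i j] unfolding interlaces_def by force
  next
    case False
    then have "r (Suc j) \<le> r i" using sorted_roots_le[OF r, of "Suc j" i] i by simp
    moreover have "q j < r (Suc j)" using rq j unfolding interlaces_def by simp
    ultimately show ?thesis using False by simp
  qed
  have nz: "poly ?Q (r i) \<noteq> 0"
  proof
    assume "poly ?Q (r i) = 0"
    then obtain j where "j < m" "r i = q j" using q unfolding sorted_roots_def by blast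
    then show False using position[of j] by (auto split: if_splits)
  qed
  have card_Q: "card {x. poly ?Q x = 0} = degree ?Q"
    using card_sorted_roots[OF q] by (simp add: degree_three_term_poly)
  have "{j. j < m \<and> r i < q j} = {i..<m}"
    using position by (force split: if_splits)
  then have "card {x. poly ?Q x = 0 \<and> r i < x} = m - i"
    using card_roots_with_property[OF q, of "\<lambda>x. r i < x"] by simp
  then have Q: "0 < (-1) ^ (m - i) * poly ?Q (r i)"
    using monic_poly_sign[OF lead_coeff_three_term_poly card_Q nz] by simp
  have P: "poly (three_term_poly a b (Suc (Suc m))) (r i) = - b m * poly ?Q (r i)"
    using sorted_roots_root[OF r i] by (simp only: poly_three_term_poly_Suc_Suc)
  have sign: "(-1::real) ^ (Suc m - i) = - ((-1) ^ (m - i))"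
    using i by (simp add: Suc_diff_le)
  show ?thesis unfolding P sign using mult_pos_pos[OF b Q] by (simp add: algebra_simps)
qed

theorem three_term_poly_interlacing:
  assumes b: "\<And>k. b k > 0"
  shows "\<exists>r q. sorted_roots (three_term_poly a b (Suc m)) (Suc m) r
           \<and> sorted_roots (three_term_poly a b m) m q \<and> interlaces r q m"
proof (induction m)
  case 0
  have "sorted_roots (three_term_poly a b (Suc 0)) (Suc 0) (\<lambda>_. a 0)"
    unfolding sorted_roots_def strict_mono_on_def by auto
  moreover have "sorted_roots (three_term_poly a b 0) 0 id" unfolding sorted_roots_def by auto
  ultimately show ?case unfolding interlaces_def by blast
next
  case (Suc m)
  then obtain r q where r: "sorted_roots (three_term_poly a b (Suc m)) (Suc m) r"
    and q: "sorted_roots (three_term_poly a b m) m q" and rq: "interlaces r q m"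
    by blast
  have "\<exists>s. sorted_roots (three_term_poly a b (Suc (Suc m))) (Suc (Suc m)) s
          \<and> interlaces s r (Suc m)"
    by (rule sorted_roots_interlacing_points[OF lead_coeff_three_term_poly degree_three_term_poly
          sorted_roots_less[OF r] three_term_poly_sign_at_roots[OF b r q rq]])
  then show ?case using r by blast
qed

lemma card_roots_three_term_poly:
  assumes "\<And>k. b k > 0"
  shows "card {x. poly (three_term_poly a b k) x = 0} = k"
proof (cases k)
  case (Suc m)
  then show ?thesis using three_term_poly_interlacing[of b a m, OF assms] card_sorted_roots by blast
qed simp

section \<open>Counting roots below a point\<close>

definition roots_below :: "real poly \<Rightarrow> real \<Rightarrow> nat" where
  "roots_below p c = card {x. poly p x = 0 \<and> x < c}"

lemma roots_below_interlacing:
  assumes r: "sorted_roots p (Suc k) r" and q: "sorted_roots p' k q" and rq: "interlaces r q k"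
  shows "roots_below p' c \<le> roots_below p c \<and> roots_below p c \<le> Suc (roots_below p' c)"
proof -
  let ?R = "{i. i < Suc k \<and> r i < c}" and ?Q = "{i. i < k \<and> q i < c}"
  have R: "roots_below p c = card ?R" and Q: "roots_below p' c = card ?Q"
    unfolding roots_below_def
    using card_roots_with_property[OF r, of "\<lambda>x. x < c"] card_roots_with_property[OF q, of "\<lambda>x. x < c"]
    by simp_all
  have "?Q \<subseteq> ?R"
  proof
    fix i assume "i \<in> ?Q"
    then show "i \<in> ?R" using rq unfolding interlaces_def by auto
  qed
  then have lower: "card ?Q \<le> card ?R" by (intro card_mono) auto
  have "?R \<subseteq> insert 0 (Suc ` ?Q)"
  proof
    fix i assume i: "i \<in> ?R"
    show "i \<in> insert 0 (Suc ` ?Q)"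
    proof (cases i)
      case (Suc j)
      then have "q j < r i" "j < k" using rq i unfolding interlaces_def by auto
      then show ?thesis using i Suc by auto
    qed simp
  qed
  then have "card ?R \<le> card (insert 0 (Suc ` ?Q))" by (intro card_mono) auto
  also have "\<dots> \<le> Suc (card (Suc ` ?Q))" by (rule card_insert_le_m1) auto
  also have "\<dots> \<le> Suc (card ?Q)" using card_image_le[of ?Q Suc] by simp
  finally show ?thesis unfolding R Q using lower by simp
qed

lemma monic_poly_sign_by_roots_below:
  fixes p :: "real poly"
  assumes lc: "lead_coeff p = 1" and card: "card {x. poly p x = 0} = degree p"
    and c: "poly p c \<noteq> 0"
  shows "0 < (-1) ^ degree p * poly p c \<longleftrightarrow> even (roots_below p c)"
proof -
  let ?A = "{x. poly p x = 0 \<and> c < x}" and ?B = "{x. poly p x = 0 \<and> x < c}"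
  have fin: "finite {x. poly p x = 0}" using lc by (intro poly_roots_finite) auto
  have fin_A: "finite ?A" using fin by (rule finite_subset[rotated]) auto
  have fin_B: "finite ?B" using fin by (rule finite_subset[rotated]) auto
  have "x \<noteq> c" if "poly p x = 0" for x using c that by auto
  then have split: "{x. poly p x = 0} = ?A \<union> ?B" by (auto simp: neq_iff)
  have "card (?A \<union> ?B) = card ?A + card ?B" by (rule card_Un_disjoint[OF fin_A fin_B]) auto
  then have deg: "degree p = card ?A + roots_below p c"
    unfolding roots_below_def card[symmetric] split .
  have eq: "(-1) ^ degree p * poly p c = (-1) ^ roots_below p c * ((-1) ^ card ?A * poly p c)"
    unfolding deg by (simp add: power_add)
  have "0 < (-1) ^ card ?A * poly p c" by (rule monic_poly_sign[OF lc card c])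
  then show ?thesis unfolding eq by (cases "even (roots_below p c)") simp_all
qed

lemma three_term_poly_sign_by_roots_below:
  assumes "\<And>k. b k > 0" and "poly (three_term_poly a b k) c \<noteq> 0"
  shows "0 < (-1) ^ k * poly (three_term_poly a b k) c \<longleftrightarrow> even (roots_below (three_term_poly a b k) c)"
  using monic_poly_sign_by_roots_below[OF lead_coeff_three_term_poly _ assms(2)]
    card_roots_three_term_poly[of b a k, OF assms(1)]
  by (simp add: degree_three_term_poly)

lemma roots_below_three_term_poly_Suc:
  assumes "\<And>k. b k > 0"
  shows "roots_below (three_term_poly a b k) c \<le> roots_below (three_term_poly a b (Suc k)) c
    \<and> roots_below (three_term_poly a b (Suc k)) c \<le> Suc (roots_below (three_term_poly a b k) c)"
proof -
  obtain r q where "sorted_roots (three_term_poly a b (Suc k)) (Suc k) r"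
    and "sorted_roots (three_term_poly a b k) k q" and "interlaces r q k"
    using three_term_poly_interlacing[of b a k, OF assms] by blast
  then show ?thesis by (rule roots_below_interlacing)
qed

lemma roots_below_three_term_poly_le: "roots_below (three_term_poly a b k) c \<le> k"
proof -
  have "roots_below (three_term_poly a b k) c \<le> card {x. poly (three_term_poly a b k) x = 0}"
    unfolding roots_below_def
    by (rule card_mono) (auto intro: poly_roots_finite[OF three_term_poly_nonzero])
  also have "\<dots> \<le> k"
    using card_poly_roots_bound[OF three_term_poly_nonzero] by (simp add: degree_three_term_poly)
  finally show ?thesis .
qed

lemma roots_below_three_term_poly_eq_0:
  assumes b: "\<And>k. b k > 0" and pos: "\<And>j. j \<le> k \<Longrightarrow> 0 < (-1) ^ j * poly (three_term_poly a b j) c"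
  shows "roots_below (three_term_poly a b k) c = 0"
  using pos
proof (induction k)
  case 0
  then show ?case using roots_below_three_term_poly_le[of a b 0 c] by simp
next
  case (Suc k)
  then have "roots_below (three_term_poly a b (Suc k)) c \<le> 1"
    using roots_below_three_term_poly_Suc[of b a k c, OF b] by simp
  moreover have pos: "0 < (-1) ^ Suc k * poly (three_term_poly a b (Suc k)) c"
    using Suc.prems by blast
  then have "poly (three_term_poly a b (Suc k)) c \<noteq> 0" by auto
  then have "even (roots_below (three_term_poly a b (Suc k)) c)"
    using three_term_poly_sign_by_roots_below[of b a "Suc k" c, OF b] pos by blast
  ultimately show ?case by (metis One_nat_def le_SucE le_zero_eq odd_one)
qed

lemma roots_below_three_term_poly_eq_degree:
  assumes b: "\<And>k. b k > 0" and pos: "\<And>j. j \<le> k \<Longrightarrow> 0 < poly (three_term_poly a b j) c"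
  shows "roots_below (three_term_poly a b k) c = k"
  using pos
proof (induction k)
  case 0
  then show ?case using roots_below_three_term_poly_le[of a b 0 c] by simp
next
  case (Suc k)
  let ?N = "roots_below (three_term_poly a b (Suc k)) c"
  have "k \<le> ?N" using Suc roots_below_three_term_poly_Suc[of b a k c, OF b] by simp
  moreover have "?N \<le> Suc k" by (rule roots_below_three_term_poly_le)
  moreover have "0 < poly (three_term_poly a b (Suc k)) c" using Suc.prems by blast
  then have "even (Suc k) \<longleftrightarrow> even ?N"
    using three_term_poly_sign_by_roots_below[of b a "Suc k" c, OF b]
    by (cases "even k") (auto simp: minus_one_power_iff)
  then have "?N \<noteq> k" by auto
  ultimately show ?case by linarith
qed

section \<open>The recurrence attached to \<open>B\<close>\<close>

definition d_coeff :: "nat \<Rightarrow> nat \<Rightarrow> real" where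
  "d_coeff L i = (if i + 1 = L then -1 else 2)"

text \<open>\<open>jacobi_diag L\<close> and \<open>jacobi_offdiag_sq L\<close> are the diagonal and the squared
  off-diagonal of \<open>G D G\<^sup>T\<close>, so \<open>B_poly L k\<close> is the characteristic polynomial of its
  leading \<open>k \<times> k\<close> block.\<close>

definition jacobi_diag :: "nat \<Rightarrow> nat \<Rightarrow> real" where
  "jacobi_diag L j = d_coeff L j + d_coeff L (Suc j)"

definition jacobi_offdiag_sq :: "nat \<Rightarrow> nat \<Rightarrow> real" where
  "jacobi_offdiag_sq L j = (d_coeff L (Suc j))\<^sup>2"

abbreviation B_poly :: "nat \<Rightarrow> nat \<Rightarrow> real poly" where
  "B_poly L k \<equiv> three_term_poly (jacobi_diag L) (jacobi_offdiag_sq L) k"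

lemma jacobi_offdiag_sq_pos: "jacobi_offdiag_sq L j > 0"
  unfolding jacobi_offdiag_sq_def d_coeff_def by simp

lemma poly_B_poly_Suc_Suc:
  "poly (B_poly L (Suc (Suc k))) x
     = (x - jacobi_diag L (Suc k)) * poly (B_poly L (Suc k)) x - jacobi_offdiag_sq L k * poly (B_poly L k) x"
  by (rule poly_three_term_poly_Suc_Suc)

lemma B_poly_at_8: "0 < poly (B_poly L k) 8 \<and> 2 * poly (B_poly L k) 8 \<le> poly (B_poly L (Suc k)) 8"
proof (induction k)
  case 0
  then show ?case unfolding jacobi_diag_def d_coeff_def by auto
next
  case (Suc k)
  define x where "x = poly (B_poly L k) 8"
  define y where "y = poly (B_poly L (Suc k)) 8"
  have xy: "0 < x" "2 * x \<le> y" using Suc unfolding x_def y_def by auto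
  have z: "poly (B_poly L (Suc (Suc k))) 8 = (8 - jacobi_diag L (Suc k)) * y - jacobi_offdiag_sq L k * x"
    unfolding x_def y_def by (rule poly_B_poly_Suc_Suc)
  consider "L = k + 2" | "L = k + 3" | "L \<noteq> k + 2" "L \<noteq> k + 3" by blast
  then have "2 * y \<le> (8 - jacobi_diag L (Suc k)) * y - jacobi_offdiag_sq L k * x"
    by cases (use xy in \<open>simp_all add: jacobi_diag_def jacobi_offdiag_sq_def d_coeff_def\<close>)
  then show ?case using xy unfolding z y_def by simp
qed

text \<open>The factor \<open>4\<close> is needed at the step where \<open>jacobi_diag\<close> drops to \<open>1\<close> while
  \<open>jacobi_offdiag_sq\<close> is still \<open>4\<close>.\<close>

lemma B_poly_at_minus_1:
  assumes L: "2 \<le> L"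
  shows "0 < (-1) ^ k * poly (B_poly L k) (-1)
    \<and> (-1) ^ k * poly (B_poly L k) (-1) \<le> (-1) ^ Suc k * poly (B_poly L (Suc k)) (-1)
    \<and> (k + 2 < L \<longrightarrow> 4 * ((-1) ^ k * poly (B_poly L k) (-1)) \<le> (-1) ^ Suc k * poly (B_poly L (Suc k)) (-1))"
proof (induction k)
  case 0
  then show ?case using L unfolding jacobi_diag_def d_coeff_def by auto
next
  case (Suc k)
  define x where "x = (-1) ^ k * poly (B_poly L k) (-1)"
  define y where "y = (-1) ^ Suc k * poly (B_poly L (Suc k)) (-1)"
  have xy: "0 < x" "x \<le> y" "k + 2 < L \<longrightarrow> 4 * x \<le> y" using Suc unfolding x_def y_def by auto
  have z: "(-1) ^ Suc (Suc k) * poly (B_poly L (Suc (Suc k))) (-1)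
      = (1 + jacobi_diag L (Suc k)) * y - jacobi_offdiag_sq L k * x"
    unfolding x_def y_def by (simp only: poly_B_poly_Suc_Suc) (simp add: algebra_simps)
  consider "L = k + 2" | "L = k + 3" | "L \<noteq> k + 2" "L \<noteq> k + 3" by blast
  then have "y \<le> (1 + jacobi_diag L (Suc k)) * y - jacobi_offdiag_sq L k * x
     \<and> (Suc k + 2 < L \<longrightarrow> 4 * y \<le> (1 + jacobi_diag L (Suc k)) * y - jacobi_offdiag_sq L k * x)"
    by cases (use xy in \<open>auto simp: jacobi_diag_def jacobi_offdiag_sq_def d_coeff_def\<close>)
  then show ?case using xy unfolding z y_def by simp
qed

lemma poly_B_poly_at_0:
  assumes L: "2 \<le> L"
  shows "poly (B_poly L k) 0
    = (if k + 1 < L then (-2) ^ k * (real k + 1) else (-2) ^ (k - 1) * (real k - 2))"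
  (is "_ = ?F k")
proof -
  have "poly (B_poly L k) 0 = ?F k \<and> poly (B_poly L (Suc k)) 0 = ?F (Suc k)"
  proof (induction k)
    case 0
    show ?case using L by (cases "L = 2") (auto simp: jacobi_diag_def d_coeff_def)
  next
    case (Suc k)
    then have z: "poly (B_poly L (Suc (Suc k))) 0
        = (0 - jacobi_diag L (Suc k)) * ?F (Suc k) - jacobi_offdiag_sq L k * ?F k"
      by (simp only: poly_B_poly_Suc_Suc)
    consider "k + 3 < L" | "L = k + 3" | "L = k + 2" "k = 0" | j where "L = k + 2" "k = Suc j"
      | j where "L < k + 2" "k = Suc j"
      using L by (cases k) fastforce+
    then have "(0 - jacobi_diag L (Suc k)) * ?F (Suc k) - jacobi_offdiag_sq L k * ?F k = ?F (Suc (Suc k))"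
      by cases (auto simp: jacobi_diag_def jacobi_offdiag_sq_def d_coeff_def algebra_simps)
    then show ?case using Suc unfolding z by simp
  qed
  then show ?thesis by blast
qed

lemma roots_below_B_poly_minus_1: "2 \<le> L \<Longrightarrow> roots_below (B_poly L k) (-1) = 0"
  using B_poly_at_minus_1
  by (intro roots_below_three_term_poly_eq_0[of "jacobi_offdiag_sq L", OF jacobi_offdiag_sq_pos]) blast

lemma roots_below_B_poly_8: "roots_below (B_poly L k) 8 = k"
  using B_poly_at_8
  by (intro roots_below_three_term_poly_eq_degree[of "jacobi_offdiag_sq L", OF jacobi_offdiag_sq_pos]) blast

lemma B_poly_sign_at_0:
  assumes L: "2 \<le> L"
  shows B_poly_sign_at_0_pos: "j \<le> max (L - 2) 1 \<Longrightarrow> 0 < (-1) ^ j * poly (B_poly L j) 0"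
    and B_poly_sign_at_0_neg: "max (L - 2) 1 + 2 \<le> j \<Longrightarrow> (-1) ^ j * poly (B_poly L j) 0 < 0"
proof -
  assume j: "j \<le> max (L - 2) 1"
  show "0 < (-1) ^ j * poly (B_poly L j) 0"
  proof (cases "j + 1 < L")
    case True
    then have "(-1) ^ j * poly (B_poly L j) 0 = ((-1) * (-2)) ^ j * (real j + 1)"
      unfolding poly_B_poly_at_0[OF L] by (simp add: power_mult_distrib[symmetric])
    then show ?thesis by simp
  next
    case False
    then have "L = 2" "j = 1" using j L by auto
    then show ?thesis unfolding poly_B_poly_at_0[OF L] by simp
  qed
next
  assume j: "max (L - 2) 1 + 2 \<le> j"
  obtain i where i: "j = Suc i" using j by (cases j) auto
  have "\<not> j + 1 < L" using j by auto
  then have "(-1) ^ j * poly (B_poly L j) 0 = - (((-1) * (-2)) ^ i * (real j - 2))"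
    unfolding poly_B_poly_at_0[OF L] i by (simp add: power_mult_distrib[symmetric])
  moreover have "real j - 2 > 0" using j by auto
  ultimately show "(-1) ^ j * poly (B_poly L j) 0 < 0" by simp
qed

text \<open>From \<open>K + 2\<close> on, the number of roots below \<open>0\<close> is odd by the sign at \<open>0\<close>, and it grows
  by at most one per step, so it stays \<open>1\<close>.\<close>

lemma roots_below_B_poly_0:
  assumes L: "2 \<le> L" and n: "L \<le> n" "3 \<le> n"
  shows "roots_below (B_poly L n) 0 = 1 \<and> poly (B_poly L n) 0 \<noteq> 0"
proof -
  define K where "K = max (L - 2) 1"
  note pos = B_poly_sign_at_0_pos[OF L, folded K_def]
    and neg = B_poly_sign_at_0_neg[OF L, folded K_def]
  have count_step: "roots_below (B_poly L k) 0 \<le> roots_below (B_poly L (Suc k)) 0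
      \<and> roots_below (B_poly L (Suc k)) 0 \<le> Suc (roots_below (B_poly L k) 0)" for k
    by (rule roots_below_three_term_poly_Suc[of "jacobi_offdiag_sq L", OF jacobi_offdiag_sq_pos])
  have K: "roots_below (B_poly L K) 0 = 0"
    by (rule roots_below_three_term_poly_eq_0[of "jacobi_offdiag_sq L", OF jacobi_offdiag_sq_pos])
      (use pos in blast)
  have "roots_below (B_poly L k) 0 \<le> 1 \<and> (K + 2 \<le> k \<longrightarrow> roots_below (B_poly L k) 0 = 1)"
    if k: "Suc K \<le> k" for k
    using k
  proof (induction k rule: dec_induct)
    case base
    then show ?case using count_step[of K] K by simp
  next
    case (step k)
    have "K + 2 \<le> Suc k" using step.hyps(1) by simp
    then have sign: "(-1) ^ Suc k * poly (B_poly L (Suc k)) 0 < 0" by (rule neg)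
    then have "poly (B_poly L (Suc k)) 0 \<noteq> 0" by auto
    then have "odd (roots_below (B_poly L (Suc k)) 0)"
      using three_term_poly_sign_by_roots_below[of "jacobi_offdiag_sq L" "jacobi_diag L" "Suc k" 0,
          OF jacobi_offdiag_sq_pos] sign
      by simp
    moreover have "roots_below (B_poly L (Suc k)) 0 \<le> 2"
      using step.IH count_step[of k] by simp
    moreover have "N = 1" if "odd N" "N \<le> 2" for N :: nat using that by presburger
    ultimately have "roots_below (B_poly L (Suc k)) 0 = 1" by blast
    then show ?case by simp
  qed
  moreover have "K + 2 \<le> n" using L n unfolding K_def by auto
  ultimately show ?thesis using neg[of n] by auto
qed

lemma B_poly_roots_located:
  assumes L: "2 \<le> L" and n: "L \<le> n" "3 \<le> n"
  obtains r where "sorted_roots (B_poly L n) n r"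
    and "-1 < r 0" "r 0 < 0" "0 < r 1" "r (n - 1) < 8"
proof -
  obtain m where m: "n = Suc m" using n by (cases n) auto
  then obtain r where r: "sorted_roots (B_poly L n) n r"
    using three_term_poly_interlacing[of "jacobi_offdiag_sq L", OF jacobi_offdiag_sq_pos] by blast
  have root: "poly (B_poly L n) (r i) = 0" if "i < n" for i using sorted_roots_root[OF r that] .
  have below: "roots_below (B_poly L n) c = card {i. i < n \<and> r i < c}" for c
    unfolding roots_below_def by (rule card_roots_with_property[OF r])
  have "{i. i < n \<and> r i < -1} = {}"
    using roots_below_B_poly_minus_1[OF L, of n] below[of "-1"] by simp
  moreover have "r 0 \<noteq> -1"
    using root[of 0] B_poly_at_minus_1[OF L, of n] n by auto
  ultimately have r0_lower: "-1 < r 0" using n by force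
  have "{i. i < n \<and> r i < 8} = {..<n}"
    by (rule card_subset_eq) (use roots_below_B_poly_8[of L n] below[of 8] in auto)
  then have upper: "r (n - 1) < 8" using m by auto
  have zero: "roots_below (B_poly L n) 0 = 1" "poly (B_poly L n) 0 \<noteq> 0"
    using roots_below_B_poly_0[OF L n] by auto
  then have neg_card: "card {i. i < n \<and> r i < 0} = 1" using below[of 0] by simp
  have r0: "r 0 < 0"
  proof (rule ccontr)
    assume "\<not> r 0 < 0"
    then have "{i. i < n \<and> r i < 0} = {}" using sorted_roots_le[OF r, of 0] by force
    then show False using neg_card by (metis card.empty zero_neq_one)
  qed
  have r1: "0 < r 1"
  proof (rule ccontr)
    assume "\<not> 0 < r 1"
    moreover have "r 1 \<noteq> 0" using root[of 1] zero(2) n by auto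
    ultimately have "{0, 1} \<subseteq> {i. i < n \<and> r i < 0}" using r0 n by auto
    then have "card {0::nat, 1} \<le> card {i. i < n \<and> r i < 0}" by (rule card_mono[rotated]) auto
    then show False using neg_card by simp
  qed
  show ?thesis using that r r0_lower r0 r1 upper .
qed

section \<open>Eigenvectors of \<open>B\<close>\<close>

lemma eigenvalueI_componentwise:
  fixes A :: "'a :: comm_ring_1 mat"
  assumes A: "A \<in> carrier_mat n n" and v: "v \<in> carrier_vec n" "v \<noteq> 0\<^sub>v n"
    and rows: "\<And>i. i < n \<Longrightarrow> (A *\<^sub>v v) $ i = k * v $ i"
  shows "eigenvalue A k"
proof -
  have "A *\<^sub>v v = k \<cdot>\<^sub>v v" by (rule eq_vecI) (use A v rows in auto)
  then have "eigenvector A v k" using A v unfolding eigenvector_def by auto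
  then show ?thesis unfolding eigenvalue_def by blast
qed

lemma B_mat_carrier: "B_mat J L \<in> carrier_mat J J"
  unfolding B_mat_def A_mat_def D_mat_def by auto

lemma B_mat_mult_vec_nth:
  assumes i: "i < J" and v: "v \<in> carrier_vec J"
  shows "(B_mat J L *\<^sub>v v) $ i = (\<Sum>l<J. A_mat J $$ (i, l) * (d_coeff L l * v $ l))"
proof -
  have "B_mat J L $$ (i, l) = A_mat J $$ (i, l) * d_coeff L l" if l: "l < J" for l
  proof -
    have "B_mat J L $$ (i, l) = (\<Sum>m<J. A_mat J $$ (i, m) * D_mat J L $$ (m, l))"
      using i l unfolding B_mat_def
      by (simp add: scalar_prod_def A_mat_def D_mat_def atLeast0LessThan)
    also have "\<dots> = (\<Sum>m<J. if m = l then A_mat J $$ (i, l) * d_coeff L l else 0)"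
      using l by (intro sum.cong) (auto simp: D_mat_def d_coeff_def)
    finally show ?thesis using l by simp
  qed
  then show ?thesis
    using i v B_mat_carrier[of J L]
    by (auto simp: scalar_prod_def atLeast0LessThan mult.assoc intro!: sum.cong)
qed

lemma A_mat_row_sum:
  assumes J: "2 \<le> J" and i: "i < J"
  shows "(\<Sum>l<J. A_mat J $$ (i, l) * f l) =
    (if i = 0 then f 0 - f 1 else if i = J - 1 then f i - f (i - 1) else 2 * f i - f (i - 1) - f (i + 1))"
proof -
  define c :: real where "c = (if i = 0 \<or> i = J - 1 then 1 else 2)"
  have "A_mat J $$ (i, l) * f l = (if l = i then c * f i else 0)
      + (if l = i - 1 then (if 0 < i then - f l else 0) else 0) + (if l = i + 1 then - f l else 0)"
    if "l < J" for l
    using that i unfolding A_mat_def c_def by auto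
  then have "(\<Sum>l<J. A_mat J $$ (i, l) * f l)
      = c * f i + (if 0 < i then - f (i - 1) else 0) + (if i + 1 < J then - f (i + 1) else 0)"
    using i by (simp add: sum.distrib)
  then show ?thesis using J i unfolding c_def by auto
qed

lemma eigenvalue_B_mat_0:
  assumes J: "2 \<le> J"
  shows "eigenvalue (B_mat J L) 0"
proof (rule eigenvalueI_componentwise[OF B_mat_carrier])
  let ?v = "vec J (\<lambda>i. 1 / d_coeff L i)"
  have d: "d_coeff L i \<noteq> 0" for i unfolding d_coeff_def by simp
  show "?v \<in> carrier_vec J" by simp
  show "?v \<noteq> 0\<^sub>v J"
  proof
    assume "?v = 0\<^sub>v J"
    then have "?v $ 0 = 0" using J by simp
    then show False using d[of 0] J by simp
  qed
  fix i assume i: "i < J"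
  have "(B_mat J L *\<^sub>v ?v) $ i = (\<Sum>l<J. A_mat J $$ (i, l) * 1)"
    using i d by (simp add: B_mat_mult_vec_nth)
  also have "\<dots> = 0" using J i by (subst A_mat_row_sum) auto
  finally show "(B_mat J L *\<^sub>v ?v) $ i = 0 * ?v $ i" by simp
qed

text \<open>For a root \<open>\<mu>\<close> of \<open>B_poly L (J - 1)\<close>, the vector of \<open>jacobi_vec L \<mu> j\<close>, \<open>0 < j < J\<close>, is a
  \<open>\<mu>\<close>-eigenvector of \<open>G D G\<^sup>T\<close>, obtained by normalising the recurrence of \<open>B_poly\<close>; its image
  under \<open>G\<^sup>T\<close>, the vector of differences of consecutive entries padded with \<open>0\<close> at both ends,
  is a \<open>\<mu>\<close>-eigenvector of \<open>B\<close>.\<close>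

definition jacobi_scale :: "nat \<Rightarrow> nat \<Rightarrow> real" where
  "jacobi_scale L j = (\<Prod>i<j. - d_coeff L (Suc i))"

definition jacobi_vec :: "nat \<Rightarrow> real \<Rightarrow> nat \<Rightarrow> real" where
  "jacobi_vec L \<mu> j = (if j = 0 then 0 else poly (B_poly L (j - 1)) \<mu> / jacobi_scale L (j - 1))"

lemma jacobi_vec_flux:
  "d_coeff L (Suc i) * (jacobi_vec L \<mu> (Suc (Suc i)) - jacobi_vec L \<mu> (Suc i))
     - d_coeff L i * (jacobi_vec L \<mu> (Suc i) - jacobi_vec L \<mu> i) = - \<mu> * jacobi_vec L \<mu> (Suc i)"
proof -
  let ?d = "d_coeff L"
  have d: "?d i \<noteq> 0" for i unfolding d_coeff_def by simp
  have scale: "jacobi_scale L (Suc j) = jacobi_scale L j * (- ?d (Suc j))" for j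
    unfolding jacobi_scale_def by simp
  have "jacobi_scale L j \<noteq> 0" for j unfolding jacobi_scale_def using d by simp
  show ?thesis
  proof (cases i)
    case 0
    then show ?thesis using d[of 1]
      by (simp add: jacobi_vec_def jacobi_scale_def jacobi_diag_def field_simps)
  next
    case (Suc m)
    define g where "g = jacobi_scale L m"
    define P0 where "P0 = poly (B_poly L m) \<mu>"
    define P1 where "P1 = poly (B_poly L (Suc m)) \<mu>"
    have "poly (B_poly L (Suc (Suc m))) \<mu>
        = (\<mu> - (?d (Suc m) + ?d (Suc (Suc m)))) * P1 - (?d (Suc m))\<^sup>2 * P0"
      unfolding P0_def P1_def
      by (simp only: poly_B_poly_Suc_Suc) (simp add: jacobi_diag_def jacobi_offdiag_sq_def)
    then have y2: "jacobi_vec L \<mu> (Suc (Suc (Suc m)))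
        = ((\<mu> - (?d (Suc m) + ?d (Suc (Suc m)))) * P1 - (?d (Suc m))\<^sup>2 * P0)
          / (g * (- ?d (Suc m)) * (- ?d (Suc (Suc m))))"
      by (simp add: jacobi_vec_def scale g_def)
    have y1: "jacobi_vec L \<mu> (Suc (Suc m)) = P1 / (g * (- ?d (Suc m)))"
      by (simp add: jacobi_vec_def scale g_def P1_def)
    have y0: "jacobi_vec L \<mu> (Suc m) = P0 / g" by (simp add: jacobi_vec_def g_def P0_def)
    have "g \<noteq> 0" unfolding g_def by fact
    then show ?thesis unfolding Suc y2 y1 y0 using d[of "Suc m"] d[of "Suc (Suc m)"]
      by (simp add: field_simps power2_eq_square)
  qed
qed

lemma eigenvalue_B_mat_root:
  assumes J: "2 \<le> J" and root: "poly (B_poly L (J - 1)) \<mu> = 0"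
  shows "eigenvalue (B_mat J L) \<mu>"
proof (rule eigenvalueI_componentwise[OF B_mat_carrier])
  let ?Y = "jacobi_vec L \<mu>"
  let ?v = "vec J (\<lambda>i. ?Y (Suc i) - ?Y i)"
  define f where "f l = d_coeff L l * (?Y (Suc l) - ?Y l)" for l
  have flux: "f (Suc i) - f i = - \<mu> * ?Y (Suc i)" for i
    unfolding f_def by (rule jacobi_vec_flux)
  have Y0: "?Y 0 = 0" and Y1: "?Y 1 = 1" and YJ: "?Y J = 0"
    using root J by (simp_all add: jacobi_vec_def jacobi_scale_def)
  show "?v \<in> carrier_vec J" by simp
  show "?v \<noteq> 0\<^sub>v J"
  proof
    assume "?v = 0\<^sub>v J"
    then have "?v $ 0 = 0" using J by simp
    then show False using J Y0 Y1 by simp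
  qed
  fix i assume i: "i < J"
  have "(B_mat J L *\<^sub>v ?v) $ i = (\<Sum>l<J. A_mat J $$ (i, l) * f l)"
    using i by (simp add: B_mat_mult_vec_nth f_def)
  also have "\<dots> = (if i = 0 then f 0 - f 1 else if i = J - 1 then f i - f (i - 1)
      else 2 * f i - f (i - 1) - f (i + 1))"
    using J i by (rule A_mat_row_sum)
  also have "\<dots> = \<mu> * (?Y (Suc i) - ?Y i)"
  proof -
    consider "i = 0" | m where "i = Suc m" "i = J - 1" | m where "i = Suc m" "i < J - 1"
      using i by (cases i) force+
    then show ?thesis
    proof cases
      case 1
      then show ?thesis using flux[of 0] Y0 by simp
    next
      case (2 m)
      then have "J = Suc i" using J by simp
      then show ?thesis using 2 flux[of m] YJ by (simp add: algebra_simps)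
    next
      case (3 m)
      then show ?thesis using flux[of m] flux[of i] by (simp add: algebra_simps)
    qed
  qed
  finally show "(B_mat J L *\<^sub>v ?v) $ i = \<mu> * ?v $ i" using i by simp
qed

section \<open>Diagonalizability and the ordered spectrum\<close>

lemma order_prod_linear_factors:
  fixes R :: "'a :: idom set"
  assumes "finite R"
  shows "order a (\<Prod>x\<in>R. [:-x, 1:]) = (if a \<in> R then 1 else 0)"
  using assms
proof (induction R rule: finite_induct)
  case empty
  then show ?case by (simp add: order_0I)
next
  case (insert y R)
  have prod: "(\<Prod>x\<in>insert y R. [:-x, 1:]) = [:-y, 1:] * (\<Prod>x\<in>R. [:-x, 1:])"
    by (subst prod.insert[OF insert.hyps]) (rule refl)
  have "[:-y, 1:] * (\<Prod>x\<in>R. [:-x, 1:]) \<noteq> 0"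
    unfolding prod[symmetric] using insert by (simp only: prod_zero_iff[OF finite.insertI]) auto
  then have "order a (\<Prod>x\<in>insert y R. [:-x, 1:]) = order a [:-y, 1:] + order a (\<Prod>x\<in>R. [:-x, 1:])"
    unfolding prod by (rule order_mult)
  moreover have "order a [:-y, 1:] = (if a = y then 1 else 0)"
    using order_power_n_n[of a 1] by (auto intro: order_0I)
  ultimately show ?case using insert by auto
qed

lemma diagonalizable_real_if_char_poly_squarefree:
  fixes A :: "real mat"
  assumes A: "A \<in> carrier_mat n n" and fin: "finite R"
    and cp: "char_poly A = (\<Prod>x\<in>R. [:-x, 1:])"
  shows "diagonalizable_real A"
proof -
  define es where "es = sorted_list_of_set R"
  have "char_poly A = (\<Prod>a\<leftarrow>es. [:-a, 1:])"
    using fin unfolding cp es_def by (simp add: prod.distinct_set_conv_list[symmetric])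
  from jordan_nf_exists[OF A this] obtain n_as where jnf: "jordan_nf A n_as" by blast
  have one: "k = 1" if "(k, a) \<in> set n_as" for k a
  proof -
    have "k \<le> order a (char_poly A)" by (rule jordan_nf_block_size_order_bound[OF jnf that])
    also have "\<dots> \<le> 1" unfolding cp order_prod_linear_factors[OF fin] by simp
    finally show ?thesis using jnf that unfolding jordan_nf_def by force
  qed
  have "map (\<lambda>(n, a). jordan_block n a) n_as = map (\<lambda>a. mat (Suc 0) (Suc 0) (\<lambda>_. a)) (map snd n_as)"
  proof (rule nth_equalityI)
    fix i assume "i < length (map (\<lambda>(n, a). jordan_block n a) n_as)"
    then have "n_as ! i \<in> set n_as" by simp
    then obtain a where "n_as ! i = (1, a)" using one by (metis prod.collapse)
    moreover have "jordan_block 1 a = mat (Suc 0) (Suc 0) (\<lambda>_. a)" by (rule eq_matI) (auto simp: jordan_block_def)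
    ultimately show "map (\<lambda>(n, a). jordan_block n a) n_as ! i = map (\<lambda>a. mat (Suc 0) (Suc 0) (\<lambda>_. a)) (map snd n_as) ! i"
      using \<open>i < _\<close> by simp
  qed simp
  then have "jordan_matrix n_as = mk_diagonal (map snd n_as)"
    unfolding jordan_matrix_def mk_diagonal_def by (rule arg_cong)
  moreover have sim: "similar_mat A (jordan_matrix n_as)" using jnf unfolding jordan_nf_def by blast
  moreover have "jordan_matrix n_as \<in> carrier_mat (dim_row A) (dim_row A)"
    using similar_matD[OF sim] by auto
  ultimately show ?thesis
    unfolding diagonalizable_real_def using mk_diagonal_diagonal by metis
qed

lemma
  fixes A :: "real mat"
  assumes A: "A \<in> carrier_mat n n" and R: "finite R" "card R = n"
    and eig: "\<And>x. x \<in> R \<Longrightarrow> eigenvalue A x"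
  shows spectrum_eq_if_card_eigenvalues: "{k. eigenvalue A k} = R"
    and diagonalizable_real_if_card_eigenvalues: "diagonalizable_real A"
proof -
  have deg: "degree (char_poly A) = n" and lc: "lead_coeff (char_poly A) = 1"
    using degree_monic_char_poly[OF A] by auto
  have roots: "{k. eigenvalue A k} = {x. poly (char_poly A) x = 0}"
    using eigenvalue_root_char_poly[OF A] by auto
  have "card {x. poly (char_poly A) x = 0} \<le> n"
    using card_poly_roots_bound[of "char_poly A"] lc deg by fastforce
  moreover have "finite {x. poly (char_poly A) x = 0}"
    using lc by (intro poly_roots_finite) auto
  ultimately show spec: "{k. eigenvalue A k} = R"
    unfolding roots using eig R by (metis card_seteq mem_Collect_eq roots subsetI)
  have "char_poly A = (\<Prod>x\<in>{x. poly (char_poly A) x = 0}. [:-x, 1:])"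
    by (rule monic_poly_eq_prod_roots[OF lc]) (use spec roots R deg in simp)
  then show "diagonalizable_real A"
    using diagonalizable_real_if_char_poly_squarefree[OF A R(1)] spec roots by simp
qed

lemma enumeration_with_zero:
  fixes r :: "nat \<Rightarrow> real"
  assumes r: "strict_mono_on {..<n} r" and r0: "r 0 < 0" and r1: "0 < r 1" and n: "2 \<le> n"
  obtains \<mu> :: "int \<Rightarrow> real"
  where "strict_mono_on {-1..int n - 1} \<mu>" "\<mu> (-1) = r 0" "\<mu> 0 = 0" "\<mu> (int n - 1) = r (n - 1)"
    "\<mu> ` {-1..int n - 1} = insert 0 (r ` {..<n})"
proof
  define \<mu> where "\<mu> i = (if i = -1 then r 0 else if i = 0 then 0 else r (nat i))" for i
  have pos: "0 < r i" if "1 \<le> i" "i < n" for i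
    using r1 strict_mono_onD[OF r, of 1 i] that by (cases "i = 1") auto
  show "strict_mono_on {-1..int n - 1} \<mu>"
  proof (rule strict_mono_onI)
    fix i j :: int assume "i \<in> {-1..int n - 1}" "j \<in> {-1..int n - 1}" "i < j"
    then consider "i = -1" "j = 0" | "i \<in> {-1, 0}" "1 \<le> j" "nat j < n" | "1 \<le> i" "nat j < n"
      by fastforce
    then show "\<mu> i < \<mu> j"
    proof cases
      case 1
      then show ?thesis using r0 by (simp add: \<mu>_def)
    next
      case 2
      then have "0 < r (nat j)" using pos[of "nat j"] by simp
      moreover have "\<mu> i \<le> 0" using 2 r0 by (auto simp: \<mu>_def)
      ultimately show ?thesis using 2 by (simp add: \<mu>_def)
    next
      case 3
      then show ?thesis using strict_mono_onD[OF r, of "nat i" "nat j"] \<open>i < j\<close>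
        by (simp add: \<mu>_def)
    qed
  qed
  show \<mu>_low: "\<mu> (-1) = r 0" "\<mu> 0 = 0" by (simp_all add: \<mu>_def)
  show "\<mu> (int n - 1) = r (n - 1)" using n by (simp add: \<mu>_def nat_diff_distrib)
  have "\<mu> ` {1..int n - 1} = r ` {1..<n}"
  proof -
    have "{1..int n - 1} = int ` {1..<n}" using image_int_atLeastLessThan[of 1 n] by auto
    then have "\<mu> ` {1..int n - 1} = (\<lambda>i. \<mu> (int i)) ` {1..<n}" by (simp add: image_image)
    also have "\<dots> = r ` {1..<n}" by (rule image_cong) (auto simp: \<mu>_def)
    finally show ?thesis .
  qed
  moreover have "{-1..int n - 1} = {-1, 0} \<union> {1..int n - 1}" and "{..<n} = {0} \<union> {1..<n}"
    using n by auto
  ultimately show "\<mu> ` {-1..int n - 1} = insert 0 (r ` {..<n})"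
    using \<mu>_low by (simp add: insert_commute)
qed

lemma negative_values_strict_mono_on:
  fixes \<mu> :: "int \<Rightarrow> real"
  assumes mono: "strict_mono_on {-1..m} \<mu>" and "\<mu> (-1) < 0" "\<mu> 0 = 0" "0 \<le> m"
  shows "{x \<in> \<mu> ` {-1..m}. x < 0} = {\<mu> (-1)}"
proof -
  have "\<mu> i < 0 \<longleftrightarrow> i = -1" if i: "i \<in> {-1..m}" for i
  proof -
    consider "i = -1" | "i = 0" | "0 < i" using i by fastforce
    then show ?thesis using assms strict_mono_onD[OF mono, of 0 i] i by cases auto
  qed
  then show ?thesis using assms(4) by auto
qed

theorem proposition3p1:
  fixes J L :: nat
  assumes "J \<ge> 5" and "2 \<le> L" and "L \<le> J - 1"
  shows "diagonalizable_real (B_mat J L)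
    \<and> (\<exists>\<mu> :: int \<Rightarrow> real.
          strict_mono_on {-1 .. int J - 2} \<mu>
        \<and> -1 < \<mu> (-1) \<and> \<mu> 0 = 0 \<and> \<mu> (int J - 2) < 8
        \<and> {k. eigenvalue (B_mat J L) k} = \<mu> ` {-1 .. int J - 2})
    \<and> card {k. eigenvalue (B_mat J L) k \<and> k < 0} = 1"
proof -
  define n where "n = J - 1"
  have n: "L \<le> n" "3 \<le> n" "int J - 2 = int n - 1" using assms unfolding n_def by auto
  obtain r where r: "sorted_roots (B_poly L n) n r"
    and bounds: "-1 < r 0" "r 0 < 0" "0 < r 1" "r (n - 1) < 8"
    using B_poly_roots_located[OF assms(2) n(1,2)] .
  obtain \<mu> where mono: "strict_mono_on {-1..int J - 2} \<mu>"
    and \<mu>: "\<mu> (-1) = r 0" "\<mu> 0 = 0" "\<mu> (int J - 2) = r (n - 1)"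
    and img: "\<mu> ` {-1..int J - 2} = insert 0 (r ` {..<n})"
    using enumeration_with_zero[of n r] r bounds n unfolding sorted_roots_def by auto
  have eig: "eigenvalue (B_mat J L) x" if "x \<in> \<mu> ` {-1..int J - 2}" for x
    using that eigenvalue_B_mat_0 eigenvalue_B_mat_root sorted_roots_root[OF r] assms(1)
    unfolding img n_def by auto
  have card: "card (\<mu> ` {-1..int J - 2}) = J"
    using strict_mono_on_imp_inj_on[OF mono] by (simp add: card_image)
  note spec = spectrum_eq_if_card_eigenvalues[OF B_mat_carrier _ card eig]
  have "{x \<in> \<mu> ` {-1..int J - 2}. x < 0} = {\<mu> (-1)}"
    using negative_values_strict_mono_on[OF mono] \<mu>(1,2) bounds(2) assms(1) by simp
  then have "{k. eigenvalue (B_mat J L) k \<and> k < 0} = {\<mu> (-1)}" using spec by blast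
  then show ?thesis
    using diagonalizable_real_if_card_eigenvalues[OF B_mat_carrier _ card eig] spec mono \<mu> bounds
    by auto
qed

end
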